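(* Let $R$ be a commutative domain with unit, let $f\in R$ be nonzero and non-invertible, and let $S=R[u,v]/(uv-f)$ (with $R$ regarded as a subring of $S$). Then the groups of invertible elements satisfy $R^{\times}=S^{\times}$. In particular, the images of $u$ and $v$ in $S$ are not invertible.
   Context: For a domain $A$, $A^{\times}$ denotes its set of invertible elements. *)

theory Defs
  imports "HOL-Computational_Algebra.Polynomial"
begin

text \<open>The bivariate polynomial ring R[u,v] is modelled as (R[u])[v], i.e. type 'a poly poly.
  The variable u is the inner indeterminate (embedded as a constant of the outer ring),
  v is the outer indeterminate.\<close>

definition var_u :: "'a::comm_ring_1 poly poly" where
  "var_u = [:[:0, 1:]:]"

definition var_v :: "'a::comm_ring_1 poly poly" where
  "var_v = [:0, 1:]"

definition const2 :: "'a::comm_ring_1 \<Rightarrow> 'a poly poly" where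
  "const2 c = [:[:c:]:]"

definition rel_uvf :: "'a::comm_ring_1 \<Rightarrow> 'a poly poly" where
  "rel_uvf f = var_u * var_v - const2 f"

text \<open>Congruence modulo the ideal (uv - f), i.e. equality in S = R[u,v]/(uv-f).\<close>
definition congS :: "'a::comm_ring_1 \<Rightarrow> 'a poly poly \<Rightarrow> 'a poly poly \<Rightarrow> bool" where
  "congS f g h \<longleftrightarrow> rel_uvf f dvd (g - h)"

definition unitS :: "'a::comm_ring_1 \<Rightarrow> 'a poly poly \<Rightarrow> bool" where
  "unitS f g \<longleftrightarrow> (\<exists>h. congS f (g * h) 1)"

end

theory Submission
  imports Defs "HOL-Computational_Algebra.Polynomial_Factorial"
begin

(* S embeds into the fraction field of R[u] by u \<mapsto> u, v \<mapsto> f/u. Since uv \<equiv> f, a power of u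
   times any element of S is congruent to a polynomial in u alone, and u is a non-zero-divisor
   modulo uv - f because f \<noteq> 0; hence the kernel of the embedding is exactly (uv - f).
   If g h \<equiv> 1 with u^n g \<equiv> P(u) and u^m h \<equiv> Q(u), then P Q = u^(n+m) in R[u], so
   P = c u^a and Q = c' u^b with c, c' units and a + b = n + m. If a > n, then g is u times an
   element of S and u would be invertible; but setting u = v = 0 sends uv - f to -f, so neither
   u nor v is invertible when f is not. Hence a = n and g \<equiv> c. *)

definition subst_u_zero :: "'a::comm_ring_1 poly poly \<Rightarrow> 'a poly" where
  "subst_u_zero g = map_poly (\<lambda>p. coeff p 0) g"

lemma subst_u_zero_mult: "subst_u_zero (p * q) = subst_u_zero p * subst_u_zero q"
  unfolding subst_u_zero_def
  by (intro poly_eqI) (simp add: coeff_map_poly coeff_mult coeff_sum coeff_mult_0)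

lemma subst_u_zero_diff: "subst_u_zero (p - q) = subst_u_zero p - subst_u_zero q"
  unfolding subst_u_zero_def by (intro poly_eqI) (simp add: coeff_map_poly)

lemma subst_u_zero_rel_uvf: "subst_u_zero (rel_uvf f) = - [:f:]"
  by (simp add: rel_uvf_def subst_u_zero_diff subst_u_zero_mult)
     (simp add: subst_u_zero_def var_u_def var_v_def const2_def map_poly_pCons)

lemma subst_u_zero_var_u: "subst_u_zero var_u = 0"
  by (simp add: subst_u_zero_def var_u_def map_poly_pCons)

lemma var_u_dvd_if_subst_u_zero_eq_0:
  fixes q :: "'a::comm_ring_1 poly poly"
  assumes "subst_u_zero q = 0"
  shows "var_u dvd q"
proof
  have "poly (coeff q j) 0 = 0" for j
    using arg_cong[OF assms, of "\<lambda>p. coeff p j"]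
    by (simp add: subst_u_zero_def coeff_map_poly poly_0_coeff_0)
  then have "coeff q j = [:0, 1:] * synthetic_div (coeff q j) 0" for j
    using synthetic_div_correct'[of 0 "coeff q j"] by simp
  then show "q = var_u * map_poly (\<lambda>p. synthetic_div p 0) q"
    by (intro poly_eqI) (simp add: var_u_def coeff_map_poly)
qed

lemma rel_uvf_dvd_var_u_mult_cancel:
  fixes f :: "'a::idom"
  assumes "f \<noteq> 0" and "rel_uvf f dvd var_u * x"
  shows "rel_uvf f dvd x"
proof -
  obtain q where q: "var_u * x = rel_uvf f * q" using assms(2) by blast
  then have "- [:f:] * subst_u_zero q = 0"
    by (metis subst_u_zero_mult subst_u_zero_rel_uvf subst_u_zero_var_u mult_zero_left)
  then obtain Q where "q = var_u * Q"
    using assms(1) var_u_dvd_if_subst_u_zero_eq_0 by fastforce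
  with q have "var_u * x = var_u * (rel_uvf f * Q)"
    by (simp add: mult.left_commute)
  moreover have "var_u \<noteq> (0 :: 'a poly poly)"
    by (simp add: var_u_def)
  ultimately have "x = rel_uvf f * Q"
    by simp
  then show ?thesis by simp
qed

lemma rel_uvf_dvd_var_u_power_mult_cancel:
  fixes f :: "'a::idom"
  assumes "f \<noteq> 0" and "rel_uvf f dvd var_u ^ n * x"
  shows "rel_uvf f dvd x"
  using assms(2) by (induct n) (auto simp: mult.assoc dest: rel_uvf_dvd_var_u_mult_cancel[OF assms(1)])

lemma var_u_power: "var_u ^ n = [:[:0, 1:] ^ n:]"
  by (induct n) (simp_all add: var_u_def)

lemma congS_var_u_power_mult_const:
  "\<exists>n P. congS f (var_u ^ n * g) [:P:]"
proof (induct g)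
  case 0
  show ?case
    unfolding congS_def by (intro exI[of _ 0]) simp
next
  case (pCons a g)
  then obtain n P k where k: "var_u ^ n * g - [:P:] = rel_uvf f * k"
    unfolding congS_def by blast
  have "pCons a g = [:a:] + var_v * g"
    by (simp add: var_v_def)
  then have "var_u ^ Suc n * pCons a g = var_u ^ Suc n * [:a:] + (var_u * var_v) * (var_u ^ n * g)"
    by (simp add: algebra_simps)
  also have "var_u * var_v = rel_uvf f + const2 f"
    by (simp add: rel_uvf_def)
  also have "var_u ^ Suc n * [:a:] = [:[:0, 1:] ^ Suc n * a:]"
    by (simp only: var_u_power) simp
  also have "[:[:0, 1:] ^ Suc n * a:] + (rel_uvf f + const2 f) * (var_u ^ n * g)
      = [:[:0, 1:] ^ Suc n * a + [:f:] * P:] + rel_uvf f * (var_u ^ n * g + const2 f * k)"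
  proof -
    have "[:[:0, 1:] ^ Suc n * a + [:f:] * P:] = [:[:0, 1:] ^ Suc n * a:] + const2 f * [:P:]"
      by (simp add: const2_def)
    moreover have "var_u ^ n * g = [:P:] + rel_uvf f * k"
      using k by (simp add: algebra_simps)
    ultimately show ?thesis
      by (simp only:) (simp add: algebra_simps)
  qed
  finally show ?case
    unfolding congS_def by (metis add_diff_cancel_left' dvd_triv_left)
qed

definition embS :: "'a::idom \<Rightarrow> 'a poly poly \<Rightarrow> 'a poly fract" where
  "embS f g = poly (map_poly to_fract g) (to_fract [:f:] / to_fract [:0, 1:])"

lemma embS_diff [simp]: "embS f (p - q) = embS f p - embS f q"
  and embS_mult [simp]: "embS f (p * q) = embS f p * embS f q"
  and embS_1 [simp]: "embS f 1 = 1"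
  and embS_const [simp]: "embS f [:P:] = to_fract P"
  and embS_const2 [simp]: "embS f (const2 c) = to_fract [:c:]"
  and embS_var_u [simp]: "embS f var_u = to_fract [:0, 1:]"
  and embS_var_v: "embS f var_v = to_fract [:f:] / to_fract [:0, 1:]"
  by (simp_all add: embS_def const2_def var_u_def var_v_def map_poly_pCons)

lemma embS_power [simp]: "embS f (p ^ n) = embS f p ^ n"
  by (induct n) simp_all

lemma embS_rel_uvf [simp]: "embS f (rel_uvf f) = 0"
  by (simp add: rel_uvf_def embS_var_v)

lemma congS_iff_embS_eq:
  fixes f :: "'a::idom"
  assumes "f \<noteq> 0"
  shows "congS f g h \<longleftrightarrow> embS f g = embS f h"
proof
  assume "congS f g h"
  then obtain k where "g - h = rel_uvf f * k"
    unfolding congS_def by blast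
  then have "embS f (g - h) = 0" by simp
  then show "embS f g = embS f h" by simp
next
  assume eq: "embS f g = embS f h"
  obtain n P where P: "congS f (var_u ^ n * (g - h)) [:P:]"
    using congS_var_u_power_mult_const by blast
  then obtain k where "var_u ^ n * (g - h) - [:P:] = rel_uvf f * k"
    unfolding congS_def by blast
  then have "embS f (var_u ^ n * (g - h) - [:P:]) = 0" by simp
  with eq have "P = 0" by simp
  with P have "rel_uvf f dvd var_u ^ n * (g - h)"
    unfolding congS_def by simp
  then show "congS f g h"
    unfolding congS_def by (rule rel_uvf_dvd_var_u_power_mult_cancel[OF assms])
qed

lemma power_mult_embS_eq_to_fract:
  fixes f :: "'a::idom"
  assumes "f \<noteq> 0"
  shows "\<exists>n P. to_fract [:0, 1:] ^ n * embS f g = to_fract P"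
proof -
  obtain n P where "congS f (var_u ^ n * g) [:P:]"
    using congS_var_u_power_mult_const by blast
  then have "to_fract [:0, 1:] ^ n * embS f g = to_fract P"
    by (simp add: congS_iff_embS_eq[OF assms])
  then show ?thesis by blast
qed

lemma unitS_iff_embS:
  "(f::'a::idom) \<noteq> 0 \<Longrightarrow> unitS f g \<longleftrightarrow> (\<exists>h. embS f g * embS f h = 1)"
  by (simp add: unitS_def congS_iff_embS_eq)

lemma not_unitS_if_constant_coeff_zero:
  fixes f :: "'a::comm_ring_1"
  assumes "\<not> f dvd 1" and "coeff (coeff g 0) 0 = 0"
  shows "\<not> unitS f g"
proof
  assume "unitS f g"
  then obtain h q where "g * h - 1 = rel_uvf f * q"
    unfolding unitS_def congS_def by blast
  then have "coeff (coeff (g * h - 1) 0) 0 = coeff (coeff (rel_uvf f * q) 0) 0"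
    by simp
  then have "1 = f * coeff (coeff q 0) 0"
    using assms(2) by (simp add: coeff_mult_0 rel_uvf_def var_u_def var_v_def const2_def)
  with assms(1) show False by (metis dvdI)
qed

lemma to_fract_power: "to_fract (x ^ n) = to_fract x ^ n"
  by (induct n) simp_all

lemma to_fract_monom: "to_fract (monom c a) = to_fract [:c:] * to_fract [:0, 1:] ^ a"
proof -
  have "monom c a = [:c:] * [:0, 1:] ^ a"
    by (simp add: monom_altdef)
  then show ?thesis
    by (simp only: to_fract_mult to_fract_power)
qed

lemma mult_eq_X_power_imp_monom:
  fixes P :: "'a::idom poly"
  assumes "P * Q = [:0, 1:] ^ k"
  shows "\<exists>c a. c dvd 1 \<and> P = monom c a"
  using assms
proof (induct k arbitrary: P Q)
  case 0
  then have "P dvd 1" by (metis dvdI power_0)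
  then show ?case by (metis is_unit_poly_iff monom_0)
next
  case (Suc k)
  then have "poly (P * Q) 0 = 0" by simp
  then consider "poly P 0 = 0" | "poly Q 0 = 0" by auto
  then show ?case
  proof cases
    case 1
    then obtain P' where P': "P = [:0, 1:] * P'" using dvd_iff_poly_eq_0[of 0 P] by auto
    with Suc.prems have "P' * Q = [:0, 1:] ^ k" by (simp add: mult.assoc)
    with Suc.hyps obtain c a where "c dvd 1" "P' = monom c a" by blast
    with P' show ?thesis by (intro exI[of _ c] exI[of _ "Suc a"]) (simp add: monom_Suc)
  next
    case 2
    then obtain Q' where "Q = [:0, 1:] * Q'" using dvd_iff_poly_eq_0[of 0 Q] by auto
    with Suc.prems have "P * Q' = [:0, 1:] ^ k" by (simp add: mult.left_commute)
    with Suc.hyps show ?thesis by blast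
  qed
qed

lemma monom_exponent_le_if_unitS:
  fixes f :: "'a::idom"
  assumes f: "f \<noteq> 0" "\<not> f dvd 1" and "unitS f g"
    and g: "to_fract [:0, 1:] ^ n * embS f g = to_fract (monom c a)"
  shows "a \<le> n"
proof (rule ccontr)
  assume "\<not> a \<le> n"
  then obtain d where a: "a = Suc (n + d)"
    using less_imp_Suc_add by fastforce
  define k where "k = const2 c * var_u ^ d"
  have "to_fract (monom c a) = to_fract [:0, 1:] ^ n * embS f (var_u * k)"
    unfolding a to_fract_monom k_def by (simp add: power_add ac_simps)
  with g have "to_fract [:0, 1:] ^ n * embS f g = to_fract [:0, 1:] ^ n * embS f (var_u * k)"
    by simp
  then have "embS f g = embS f var_u * embS f k"
    by simp
  moreover obtain h where "embS f g * embS f h = 1"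
    using \<open>unitS f g\<close> unitS_iff_embS[OF f(1)] by blast
  ultimately have "embS f var_u * embS f (k * h) = 1"
    by (simp add: mult.assoc)
  then have "unitS f var_u"
    using unitS_iff_embS[OF f(1)] by blast
  moreover have "\<not> unitS f var_u"
    using f(2) by (rule not_unitS_if_constant_coeff_zero) (simp add: var_u_def)
  ultimately show False by contradiction
qed

lemma unitS_imp_congS_const2:
  fixes f :: "'a::idom"
  assumes f: "f \<noteq> 0" "\<not> f dvd 1" and "unitS f g"
  shows "\<exists>c. c dvd 1 \<and> congS f g (const2 c)"
proof -
  define U where "U = to_fract [:0, 1 :: 'a:]"
  obtain h where gh: "embS f g * embS f h = 1"
    using \<open>unitS f g\<close> unitS_iff_embS[OF f(1)] by blast
  then have "unitS f h"
    using unitS_iff_embS[OF f(1)] by (metis mult.commute)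
  obtain n P where P: "U ^ n * embS f g = to_fract P"
    using power_mult_embS_eq_to_fract[OF f(1)] unfolding U_def by blast
  obtain m Q where Q: "U ^ m * embS f h = to_fract Q"
    using power_mult_embS_eq_to_fract[OF f(1)] unfolding U_def by blast
  have "to_fract (P * Q) = to_fract ([:0, 1:] ^ (n + m))"
    using gh by (simp flip: P Q add: U_def to_fract_power power_add algebra_simps)
  then have PQ: "P * Q = [:0, 1:] ^ (n + m)"
    by (simp only: to_fract_eq_iff)
  obtain c a where c: "c dvd 1" "P = monom c a"
    using mult_eq_X_power_imp_monom[OF PQ] by blast
  obtain c' b where c': "c' dvd 1" "Q = monom c' b"
    using mult_eq_X_power_imp_monom[of Q P] PQ by (metis mult.commute)
  have "c * c' \<noteq> 0"
    using c(1) c'(1) by auto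
  then have "a + b = n + m"
    using arg_cong[OF PQ, of degree] c(2) c'(2)
    by (simp add: mult_monom degree_monom_eq degree_linear_power[of 0, simplified])
  moreover have "a \<le> n"
    using monom_exponent_le_if_unitS[OF f \<open>unitS f g\<close>] P c(2) by (simp add: U_def)
  moreover have "b \<le> m"
    using monom_exponent_le_if_unitS[OF f \<open>unitS f h\<close>] Q c'(2) by (simp add: U_def)
  ultimately have "a = n"
    by linarith
  then have "U ^ n * embS f g = U ^ n * embS f (const2 c)"
    using P c(2) by (simp add: to_fract_monom U_def mult.commute)
  then have "congS f g (const2 c)"
    by (simp add: congS_iff_embS_eq[OF f(1)] U_def)
  with c(1) show ?thesis by blast
qed

theorem lemma1p2:
  fixes f :: "'a::idom"
  assumes "f \<noteq> 0" and "\<not> f dvd 1"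
  shows "(\<forall>g. unitS f g \<longleftrightarrow> (\<exists>c. c dvd 1 \<and> congS f g (const2 c)))
         \<and> (\<forall>c d. congS f (const2 c) (const2 d) \<longrightarrow> c = d)
         \<and> \<not> unitS f var_u \<and> \<not> unitS f var_v"
proof (intro conjI allI impI iffI)
  fix g
  assume "unitS f g"
  with assms show "\<exists>c. c dvd 1 \<and> congS f g (const2 c)"
    by (rule unitS_imp_congS_const2)
next
  fix g
  assume "\<exists>c. c dvd 1 \<and> congS f g (const2 c)"
  then obtain c d where "1 = c * d" "congS f g (const2 c)"
    by blast
  then have "embS f g * embS f (const2 d) = 1"
    by (simp add: congS_iff_embS_eq[OF assms(1)] mult.commute pCons_one flip: to_fract_mult)
  then show "unitS f g"
    using unitS_iff_embS[OF assms(1)] by blast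
next
  fix c d
  assume "congS f (const2 c) (const2 d)"
  then show "c = d"
    by (simp add: congS_iff_embS_eq[OF assms(1)])
next
  show "\<not> unitS f var_u" "\<not> unitS f var_v"
    by (rule not_unitS_if_constant_coeff_zero[OF assms(2)], simp add: var_u_def var_v_def)+
qed

end
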